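(* Let $A$ be a square real matrix that is weakly diagonally dominant, is a Z-matrix, and has nonnegative diagonal entries. Then the following are equivalent: (i) $A$ is a nonsingular M-matrix; (ii) $A$ is nonsingular; (iii) $A$ is weakly chained diagonally dominant.
   Context: For a complex matrix $A=(a_{ij})$: row $i$ is strictly diagonally dominant (s.d.d.) if $|a_{ii}|>\sum_{j\ne i}|a_{ij}|$ and weakly diagonally dominant (w.d.d.) if $|a_{ii}|\ge\sum_{j\ne i}|a_{ij}|$; the matrix is s.d.d. (resp. w.d.d.) if all its rows are. The directed adjacency graph of an $(M+1)\times(M+1)$ matrix has vertices $\{0,\dots,M\}$ and an edge $i\to j$ iff $a_{ij}\ne0$. A square matrix is weakly chained diagonally dominant (w.c.d.d.) if it is w.d.d. and for every row $i_1$ that is not s.d.d. there is a walk $i_1\to i_2\to\cdots\to i_k$ in its adjacency graph with $i_k$ an s.d.d. row. A Z-matrix is a real matrix with nonpositive off-diagonal entries. A nonsingular M-matrix is a Z-matrix that is monotone, i.e. nonsingular with entrywise nonnegative inverse. *)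

theory Defs
  imports "HOL-Analysis.Analysis"
begin

definition row_sdd :: "('a::real_normed_vector) ^ 'n ^ 'n \<Rightarrow> 'n \<Rightarrow> bool" where
  "row_sdd A i \<longleftrightarrow> norm (A $ i $ i) > (\<Sum>j\<in>UNIV - {i}. norm (A $ i $ j))"

definition row_wdd :: "('a::real_normed_vector) ^ 'n ^ 'n \<Rightarrow> 'n \<Rightarrow> bool" where
  "row_wdd A i \<longleftrightarrow> norm (A $ i $ i) \<ge> (\<Sum>j\<in>UNIV - {i}. norm (A $ i $ j))"

definition wdd :: "('a::real_normed_vector) ^ 'n ^ 'n \<Rightarrow> bool" where
  "wdd A \<longleftrightarrow> (\<forall>i. row_wdd A i)"

definition adj_walk :: "('a::zero) ^ 'n ^ 'n \<Rightarrow> 'n list \<Rightarrow> bool" where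
  "adj_walk A ws \<longleftrightarrow> ws \<noteq> [] \<and> (\<forall>t. Suc t < length ws \<longrightarrow> A $ (ws ! t) $ (ws ! Suc t) \<noteq> 0)"

definition wcdd :: "('a::real_normed_vector) ^ 'n ^ 'n \<Rightarrow> bool" where
  "wcdd A \<longleftrightarrow> wdd A \<and>
     (\<forall>i. \<not> row_sdd A i \<longrightarrow>
        (\<exists>ws. adj_walk A ws \<and> hd ws = i \<and> row_sdd A (last ws)))"

definition Z_matrix :: "real ^ 'n ^ 'n \<Rightarrow> bool" where
  "Z_matrix A \<longleftrightarrow> (\<forall>i j. i \<noteq> j \<longrightarrow> A $ i $ j \<le> 0)"

definition monotone_matrix :: "real ^ 'n ^ 'n \<Rightarrow> bool" where
  "monotone_matrix A \<longleftrightarrow> invertible A \<and> (\<forall>i j. matrix_inv A $ i $ j \<ge> 0)"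

definition nonsingular_M_matrix :: "real ^ 'n ^ 'n \<Rightarrow> bool" where
  "nonsingular_M_matrix A \<longleftrightarrow> Z_matrix A \<and> monotone_matrix A"

end

theory Submission
  imports Defs
begin

text \<open>For a Z-matrix with nonnegative diagonal, row \<open>i\<close> is s.d.d. iff its row sum \<open>r\<^sub>i\<close> is
  positive and w.d.d. iff \<open>r\<^sub>i \<ge> 0\<close>. Writing
  \<open>(A x)\<^sub>i = r\<^sub>i x\<^sub>i + \<Sum>\<^sub>j a\<^sub>i\<^sub>j (x\<^sub>j - x\<^sub>i)\<close>, a discrete minimum principle follows:
  if \<open>A x \<ge> 0\<close> and \<open>x\<close> had a negative minimum, every row where it is attained has row sum 0
  (so is not s.d.d.) and all its graph neighbours attain the minimum too; following a walk to an
  s.d.d. row gives a contradiction. Hence a w.c.d.d. matrix satisfies \<open>A x \<ge> 0 \<Longrightarrow> x \<ge> 0\<close>,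
  which makes it nonsingular with nonnegative inverse.
  Conversely, if some non-s.d.d. row \<open>i\<^sub>0\<close> reaches no s.d.d. row, the set \<open>R\<close> of rows reachable
  from \<open>i\<^sub>0\<close> consists of rows with zero row sum and is closed under edges; a solution of
  \<open>A x = -\<one>\<^sub>R\<close> would at a row of \<open>R\<close> maximising \<open>x\<close> over \<open>R\<close> give \<open>(A x)\<^sub>i \<ge> 0\<close>, so none exists.\<close>

definition adj_rel :: "('a::zero) ^ 'n ^ 'n \<Rightarrow> ('n \<times> 'n) set" where
  "adj_rel A = {(i, j). A $ i $ j \<noteq> 0}"

lemma adj_walk_snoc:
  assumes "adj_walk A ws" and "A $ last ws $ k \<noteq> 0"
  shows "adj_walk A (ws @ [k])"
  unfolding adj_walk_def
proof (intro conjI allI impI)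
  fix t assume t: "Suc t < length (ws @ [k])"
  show "A $ ((ws @ [k]) ! t) $ ((ws @ [k]) ! Suc t) \<noteq> 0"
  proof (cases "Suc t < length ws")
    case True
    then show ?thesis using assms(1) unfolding adj_walk_def by (simp add: nth_append)
  next
    case False
    with t assms(1) have "t = length ws - 1" "ws \<noteq> []" unfolding adj_walk_def by auto
    then show ?thesis using assms(2) by (simp add: nth_append last_conv_nth)
  qed
qed simp

lemma adj_walk_in_rtrancl:
  assumes "adj_walk A ws" and "t < length ws"
  shows "(hd ws, ws ! t) \<in> (adj_rel A)\<^sup>*"
  using assms(2)
proof (induction t)
  case 0
  with assms(1) show ?case by (simp add: hd_conv_nth adj_walk_def)
next
  case (Suc t)
  then have "(ws ! t, ws ! Suc t) \<in> adj_rel A"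
    using assms(1) unfolding adj_walk_def adj_rel_def by auto
  with Suc show ?case by (meson Suc_lessD rtrancl.rtrancl_into_rtrancl)
qed

lemma adj_walk_iff_rtrancl:
  "(\<exists>ws. adj_walk A ws \<and> hd ws = i \<and> last ws = j) \<longleftrightarrow> (i, j) \<in> (adj_rel A)\<^sup>*"
proof
  assume "\<exists>ws. adj_walk A ws \<and> hd ws = i \<and> last ws = j"
  then obtain ws where "adj_walk A ws" "hd ws = i" "last ws = j" by blast
  then show "(i, j) \<in> (adj_rel A)\<^sup>*"
    using adj_walk_in_rtrancl[of A ws "length ws - 1"]
    by (simp add: adj_walk_def last_conv_nth)
next
  assume "(i, j) \<in> (adj_rel A)\<^sup>*"
  then show "\<exists>ws. adj_walk A ws \<and> hd ws = i \<and> last ws = j"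
  proof (induction rule: rtrancl_induct)
    case base
    show ?case by (intro exI[of _ "[i]"]) (simp add: adj_walk_def)
  next
    case (step j k)
    then obtain ws where ws: "adj_walk A ws" "hd ws = i" "last ws = j" by blast
    with step.hyps(2) have "adj_walk A (ws @ [k])"
      by (intro adj_walk_snoc) (auto simp: adj_rel_def)
    with ws show ?case by (intro exI[of _ "ws @ [k]"]) (simp add: adj_walk_def)
  qed
qed

lemma wcdd_iff_rtrancl:
  "wcdd A \<longleftrightarrow> wdd A \<and>
     (\<forall>i. \<not> row_sdd A i \<longrightarrow> (\<exists>j. (i, j) \<in> (adj_rel A)\<^sup>* \<and> row_sdd A j))"
  unfolding wcdd_def adj_walk_iff_rtrancl[symmetric] by metis

lemma Z_matrix_offdiag_norm_sum:
  fixes A :: "real ^ 'n ^ 'n"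
  assumes "Z_matrix A"
  shows "(\<Sum>j\<in>UNIV - {i}. norm (A $ i $ j)) = A $ i $ i - (\<Sum>j\<in>UNIV. A $ i $ j)"
proof -
  have "(\<Sum>j\<in>UNIV - {i}. norm (A $ i $ j)) = (\<Sum>j\<in>UNIV - {i}. - A $ i $ j)"
    using assms unfolding Z_matrix_def by (intro sum.cong) auto
  also have "\<dots> = A $ i $ i - (\<Sum>j\<in>UNIV. A $ i $ j)"
    by (simp add: sum_negf sum.remove[of UNIV i])
  finally show ?thesis .
qed

lemma Z_matrix_row_sdd_iff:
  fixes A :: "real ^ 'n ^ 'n"
  assumes "Z_matrix A" and "A $ i $ i \<ge> 0"
  shows "row_sdd A i \<longleftrightarrow> (\<Sum>j\<in>UNIV. A $ i $ j) > 0"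
  using Z_matrix_offdiag_norm_sum[OF assms(1), of i] assms(2) unfolding row_sdd_def by auto

lemma Z_matrix_row_wdd_iff:
  fixes A :: "real ^ 'n ^ 'n"
  assumes "Z_matrix A" and "A $ i $ i \<ge> 0"
  shows "row_wdd A i \<longleftrightarrow> (\<Sum>j\<in>UNIV. A $ i $ j) \<ge> 0"
  using Z_matrix_offdiag_norm_sum[OF assms(1), of i] assms(2) unfolding row_wdd_def by auto

lemma matrix_vector_mult_row_split:
  fixes A :: "'a::comm_ring_1 ^ 'n ^ 'n"
  shows "(A *v x) $ i = (\<Sum>j\<in>UNIV. A $ i $ j) * x $ i + (\<Sum>j\<in>UNIV. A $ i $ j * (x $ j - x $ i))"
  by (simp add: matrix_vector_mult_def sum_distrib_right right_diff_distrib sum_subtractf)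

lemma Z_matrix_row_at_negative_minimum:
  fixes A :: "real ^ 'n ^ 'n"
  assumes Z: "Z_matrix A" and r: "(\<Sum>j\<in>UNIV. A $ i $ j) \<ge> 0"
    and neg: "x $ i < 0" and min: "\<And>j. x $ i \<le> x $ j" and Ax: "(A *v x) $ i \<ge> 0"
  shows "(\<Sum>j\<in>UNIV. A $ i $ j) = 0" and "\<And>j. A $ i $ j \<noteq> 0 \<Longrightarrow> x $ j = x $ i"
proof -
  have term_nonpos: "A $ i $ j * (x $ j - x $ i) \<le> 0" for j
    using Z min[of j] unfolding Z_matrix_def by (cases "j = i") (auto simp: mult_nonpos_nonneg)
  have "(\<Sum>j\<in>UNIV. A $ i $ j) * x $ i \<le> 0"
    using r neg by (simp add: mult_nonneg_nonpos)
  moreover have "(\<Sum>j\<in>UNIV. A $ i $ j * (x $ j - x $ i)) \<le> 0"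
    using term_nonpos by (simp add: sum_nonpos)
  ultimately have rx: "(\<Sum>j\<in>UNIV. A $ i $ j) * x $ i = 0"
    and sum0: "(\<Sum>j\<in>UNIV. A $ i $ j * (x $ j - x $ i)) = 0"
    using Ax matrix_vector_mult_row_split[of A x i] by linarith+
  from rx neg show "(\<Sum>j\<in>UNIV. A $ i $ j) = 0" by simp
  have "A $ i $ j * (x $ j - x $ i) = 0" for j
    using sum0 term_nonpos sum_nonneg_eq_0_iff[of UNIV "\<lambda>j. - (A $ i $ j * (x $ j - x $ i))"]
    by (simp add: sum_negf)
  then show "A $ i $ j \<noteq> 0 \<Longrightarrow> x $ j = x $ i" for j by (metis eq_iff_diff_eq_0 mult_eq_0_iff)
qed

lemma wcdd_Z_matrix_nonneg_preimage:
  fixes A :: "real ^ 'n ^ 'n"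
  assumes W: "wcdd A" and Z: "Z_matrix A" and d: "\<forall>i. A $ i $ i \<ge> 0"
    and Ax: "\<forall>i. (A *v x) $ i \<ge> 0"
  shows "x $ k \<ge> 0"
proof (rule ccontr)
  assume "\<not> x $ k \<ge> 0"
  define m where "m = Min (range (\<lambda>i. x $ i))"
  have m_le: "m \<le> x $ j" for j unfolding m_def by (rule Min_le) auto
  have "m \<in> range (\<lambda>i. x $ i)" unfolding m_def by (rule Min_in) auto
  then obtain i0 where i0: "x $ i0 = m" by auto
  have m_neg: "m < 0" using m_le[of k] \<open>\<not> x $ k \<ge> 0\<close> by simp
  define S where "S = {i. x $ i = m}"
  have S_not_sdd: "\<not> row_sdd A i" and S_closed: "A $ i $ j \<noteq> 0 \<Longrightarrow> j \<in> S"
    if "i \<in> S" for i j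
  proof -
    have r: "(\<Sum>j\<in>UNIV. A $ i $ j) \<ge> 0"
      using W Z_matrix_row_wdd_iff[OF Z] d unfolding wcdd_def wdd_def by blast
    note at_min = Z_matrix_row_at_negative_minimum[OF Z r, of x]
    from that have xi: "x $ i = m" by (simp add: S_def)
    show "\<not> row_sdd A i"
      using at_min(1) xi m_neg m_le Ax Z_matrix_row_sdd_iff[OF Z] d by auto
    show "A $ i $ j \<noteq> 0 \<Longrightarrow> j \<in> S"
      using at_min(2) xi m_neg m_le Ax unfolding S_def by auto
  qed
  have "i0 \<in> S" using i0 by (simp add: S_def)
  then obtain j where "(i0, j) \<in> (adj_rel A)\<^sup>*" and "row_sdd A j"
    using W S_not_sdd unfolding wcdd_iff_rtrancl by blast
  moreover have "(adj_rel A)\<^sup>* `` S = S"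
    by (rule Image_closed_trancl) (auto simp: adj_rel_def intro: S_closed)
  ultimately show False using \<open>i0 \<in> S\<close> S_not_sdd by blast
qed

lemma matrix_inv_right:
  assumes "invertible A"
  shows "A ** matrix_inv A = mat 1"
  using someI_ex[of "\<lambda>A'. A ** A' = mat 1 \<and> A' ** A = mat 1"] assms
  unfolding invertible_def matrix_inv_def by blast

lemma wcdd_Z_matrix_invertible:
  fixes A :: "real ^ 'n ^ 'n"
  assumes W: "wcdd A" and Z: "Z_matrix A" and d: "\<forall>i. A $ i $ i \<ge> 0"
  shows "invertible A"
proof -
  have "x = 0" if "A *v x = 0" for x
  proof -
    have "A *v (- x) = 0" using that by (simp add: matrix_vector_mult_def vec_eq_iff sum_negf)
    then have "x $ i = 0" for i
      using wcdd_Z_matrix_nonneg_preimage[OF W Z d, of x i]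
        wcdd_Z_matrix_nonneg_preimage[OF W Z d, of "- x" i] that by simp
    then show ?thesis by (simp add: vec_eq_iff)
  qed
  then show ?thesis using invertible_left_inverse matrix_left_invertible_ker by blast
qed

lemma wcdd_Z_matrix_nonsingular_M_matrix:
  fixes A :: "real ^ 'n ^ 'n"
  assumes W: "wcdd A" and Z: "Z_matrix A" and d: "\<forall>i. A $ i $ i \<ge> 0"
  shows "nonsingular_M_matrix A"
proof -
  have inv: "invertible A" using wcdd_Z_matrix_invertible[OF W Z d] .
  have "matrix_inv A $ i $ j \<ge> 0" for i j
  proof -
    have "A *v (matrix_inv A *v axis j 1) = axis j 1"
      by (simp add: matrix_vector_mul_assoc matrix_inv_right[OF inv])
    then have "(matrix_inv A *v axis j 1) $ i \<ge> 0"
      using wcdd_Z_matrix_nonneg_preimage[OF W Z d] by (simp add: axis_def)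
    then show ?thesis by (simp add: matrix_vector_mult_basis column_def)
  qed
  with inv Z show ?thesis unfolding nonsingular_M_matrix_def monotone_matrix_def by blast
qed

lemma Z_matrix_row_at_local_maximum:
  fixes A :: "real ^ 'n ^ 'n"
  assumes Z: "Z_matrix A" and r: "(\<Sum>j\<in>UNIV. A $ i $ j) = 0"
    and max: "\<And>j. A $ i $ j \<noteq> 0 \<Longrightarrow> x $ j \<le> x $ i"
  shows "(A *v x) $ i \<ge> 0"
proof -
  have "A $ i $ j * (x $ j - x $ i) \<ge> 0" for j
    using Z max[of j] unfolding Z_matrix_def
    by (cases "j = i \<or> A $ i $ j = 0") (auto simp: mult_nonpos_nonpos)
  then show ?thesis using r matrix_vector_mult_row_split[of A x i] by (simp add: sum_nonneg)
qed

lemma wdd_Z_matrix_invertible_imp_wcdd: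
  fixes A :: "real ^ 'n ^ 'n"
  assumes W: "wdd A" and Z: "Z_matrix A" and d: "\<forall>i. A $ i $ i \<ge> 0" and inv: "invertible A"
  shows "wcdd A"
proof (rule ccontr)
  assume "\<not> wcdd A"
  then obtain i0 where no_sdd: "\<And>j. (i0, j) \<in> (adj_rel A)\<^sup>* \<Longrightarrow> \<not> row_sdd A j"
    using W unfolding wcdd_iff_rtrancl by blast
  define R where "R = (adj_rel A)\<^sup>* `` {i0}"
  have R_closed: "j \<in> R \<Longrightarrow> A $ j $ k \<noteq> 0 \<Longrightarrow> k \<in> R" for j k
    unfolding R_def adj_rel_def by (auto intro: rtrancl_into_rtrancl)
  have R_row_sum: "(\<Sum>j\<in>UNIV. A $ i $ j) = 0" if "i \<in> R" for i
  proof -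
    have di: "A $ i $ i \<ge> 0" using d by simp
    have "\<not> row_sdd A i" using that no_sdd by (simp add: R_def)
    moreover have "row_wdd A i" using W by (simp add: wdd_def)
    ultimately show ?thesis
      by (simp add: Z_matrix_row_sdd_iff[OF Z di] Z_matrix_row_wdd_iff[OF Z di])
  qed
  define b :: "real ^ 'n" where "b = (\<chi> i. if i \<in> R then -1 else 0)"
  have "surj ((*v) A)"
    using inv invertible_right_inverse matrix_right_invertible_surjective by blast
  then obtain x where x: "A *v x = b" by (metis surjD)
  have "finite R" "R \<noteq> {}" by (auto simp: R_def)
  then have "Max ((\<lambda>j. x $ j) ` R) \<in> (\<lambda>j. x $ j) ` R" by (intro Max_in) auto
  then obtain i where iR: "i \<in> R" and "x $ i = Max ((\<lambda>j. x $ j) ` R)" by auto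
  with \<open>finite R\<close> have i_max: "x $ j \<le> x $ i" if "j \<in> R" for j using that by simp
  have "(A *v x) $ i \<ge> 0"
    using Z_matrix_row_at_local_maximum[OF Z R_row_sum[OF iR]] R_closed[OF iR] i_max by blast
  with x iR show False by (simp add: b_def)
qed

theorem theorem3p7:
  fixes A :: "real ^ 'n ^ 'n"
  assumes "wdd A" and "Z_matrix A" and "\<forall>i. A $ i $ i \<ge> 0"
  shows "(nonsingular_M_matrix A \<longleftrightarrow> invertible A) \<and> (invertible A \<longleftrightarrow> wcdd A)"
  using wcdd_Z_matrix_nonsingular_M_matrix[OF _ assms(2,3)]
    wdd_Z_matrix_invertible_imp_wcdd[OF assms]
  unfolding nonsingular_M_matrix_def monotone_matrix_def by blast

end
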